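(* Let $k>1$, $p>1$, and $r,s\in(0,1)$ with $r\ge s$. Then $$\left(\frac{\arcsin_p(s)}{\arcsin_p(r)}\right)^k\le\frac{\arcsin_p(s^k)}{\arcsin_p(r^k)},\qquad \left(\frac{\operatorname{artanh}_p(s)}{\operatorname{artanh}_p(r)}\right)^k\le\frac{\operatorname{artanh}_p(s^k)}{\operatorname{artanh}_p(r^k)},\qquad \frac{\operatorname{arsinh}_p(s^k)}{\operatorname{arsinh}_p(r^k)}\le\left(\frac{\operatorname{arsinh}_p(s)}{\operatorname{arsinh}_p(r)}\right)^k.$$
   Context: For $p>1$ and $y\in(0,1)$: $\arcsin_p y=\int_0^y(1-t^p)^{-1/p}dt$, $\operatorname{arsinh}_p y=\int_0^y(1+t^p)^{-1/p}dt$, $\operatorname{artanh}_p y=\int_0^y(1-t^p)^{-1}dt$. *)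

theory Defs
  imports "HOL-Analysis.Analysis"
begin

definition arcsin_p :: "real \<Rightarrow> real \<Rightarrow> real" where
  "arcsin_p p y = integral {0..y} (\<lambda>t. (1 - t powr p) powr (- 1 / p))"

definition arsinh_p :: "real \<Rightarrow> real \<Rightarrow> real" where
  "arsinh_p p y = integral {0..y} (\<lambda>t. (1 + t powr p) powr (- 1 / p))"

definition artanh_p :: "real \<Rightarrow> real \<Rightarrow> real" where
  "artanh_p p y = integral {0..y} (\<lambda>t. 1 / (1 - t powr p))"

end

theory Submission
  imports Defs
begin

text \<open>Write \<open>F x = \<integral>\<^sub>0\<^sup>x f\<close>. The inequality \<open>(F s / F r)\<^sup>k \<le> F (s\<^sup>k) / F (r\<^sup>k)\<close> for \<open>s \<le> r\<close>
  says that \<open>x \<mapsto> ln F (x\<^sup>k) - k ln F x\<close> is nonincreasing. Its derivative is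
  \<open>(k / x) (E (x\<^sup>k) - E x)\<close>, where \<open>E x = x f x / F x\<close> is the elasticity of \<open>F\<close>; as \<open>x\<^sup>k \<le> x\<close>, it
  suffices that \<open>E\<close> be nondecreasing. Writing \<open>F y = l \<integral>\<^sub>0\<^sup>x f (l t) dt\<close> with \<open>l = y / x\<close> shows that this
  holds as soon as \<open>f x / f (l x)\<close> is nondecreasing in \<open>x\<close> for every \<open>l \<in> (0, 1]\<close>. The three
  integrands are \<open>\<phi> (t\<^sup>p)\<close> with \<open>\<phi> u\<close> equal to \<open>(1 - u) powr (-1/p)\<close>, \<open>1 / (1 - u)\<close> and \<open>(1 + u) powr (-1/p)\<close>,
  and the monotonicity reduces to \<open>(1 - l u) (1 - v) \<le> (1 - u) (1 - l v)\<close> for \<open>u \<le> v\<close>. For \<open>arsinh_p\<close>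
  every monotonicity is reversed, which the sign \<open>\<sigma> = -1\<close> keeps track of.\<close>

text \<open>For \<open>\<sigma> = 1\<close> (resp. \<open>\<sigma> = -1\<close>): for every \<open>l \<in> (0, 1]\<close>, the quotient \<open>f x / f (l x)\<close> is
  nondecreasing (resp. nonincreasing) in \<open>x \<in> [0, 1)\<close>, stated without division.\<close>

definition dilation_quotient_mono :: "real \<Rightarrow> (real \<Rightarrow> real) \<Rightarrow> bool" where
  "dilation_quotient_mono \<sigma> f \<longleftrightarrow>
     (\<forall>t x l. 0 \<le> t \<longrightarrow> t \<le> x \<longrightarrow> x < 1 \<longrightarrow> 0 < l \<longrightarrow> l \<le> 1 \<longrightarrow>
        \<sigma> * (f t * f (l * x)) \<le> \<sigma> * (f (l * t) * f x))"

lemma dilation_quotient_monoD: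
  assumes "dilation_quotient_mono \<sigma> f" "0 \<le> t" "t \<le> x" "x < 1" "0 < l" "l \<le> 1"
  shows "\<sigma> * (f t * f (l * x)) \<le> \<sigma> * (f (l * t) * f x)"
  using assms unfolding dilation_quotient_mono_def by simp

lemma integral_has_real_derivative_at:
  assumes "continuous_on {a..<b} f" "a < x" "x < b"
  shows "((\<lambda>u. integral {a..u} f) has_real_derivative f x) (at x)"
proof -
  define c where "c = (x + b) / 2"
  have "continuous_on {a..c} f"
    by (rule continuous_on_subset[OF assms(1)]) (use assms in \<open>auto simp: c_def\<close>)
  then have "((\<lambda>u. integral {a..u} f) has_real_derivative f x) (at x within {a..c})"
    by (rule integral_has_real_derivative) (use assms in \<open>auto simp: c_def\<close>)
  moreover have "x \<in> interior {a..c}"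
    using assms by (simp add: c_def)
  ultimately show ?thesis
    by (metis at_within_interior)
qed

lemma integral_pos_if_continuous_pos:
  fixes f :: "real \<Rightarrow> real"
  assumes "continuous_on {a..b} f" "\<forall>t\<in>{a..b}. 0 < f t" "a < b"
  shows "0 < integral {a..b} f"
proof -
  obtain m where m: "m \<in> {a..b}" "\<forall>t\<in>{a..b}. f m \<le> f t"
    using continuous_attains_inf[OF compact_Icc _ assms(1)] assms(3) by auto
  have "integral {a..b} (\<lambda>_. f m) \<le> integral {a..b} f"
    using m assms(1) by (intro integral_le integrable_continuous_real) auto
  moreover have "0 < integral {a..b} (\<lambda>_. f m)"
    using m assms by simp
  ultimately show ?thesis by linarith
qed

lemma integral_elasticity_mono:
  fixes f :: "real \<Rightarrow> real"
  assumes mono: "dilation_quotient_mono \<sigma> f" and cont: "continuous_on {0..<1} f"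
    and y: "0 < y" "y \<le> x" "x < 1"
  shows "\<sigma> * (y * f y * integral {0..x} f) \<le> \<sigma> * (x * f x * integral {0..y} f)"
proof -
  define l where "l = y / x"
  have l: "0 < l" "l \<le> 1" "l * x = y" "y / l = x"
    using y by (auto simp: l_def)
  have cont_x: "continuous_on {0..x} f"
    using y by (intro continuous_on_subset[OF cont]) auto
  have "integral {0..y / l} (\<lambda>t. f (l * t)) = integral {0..y} f / l"
    using integral_stretch_real[of l 0 y f] l(1) by simp
  then have stretch: "integral {0..x} (\<lambda>t. f (l * t)) = integral {0..y} f / l"
    by (simp only: l(4))
  have "integral {0..x} (\<lambda>t. \<sigma> * (f t * f y)) \<le> integral {0..x} (\<lambda>t. \<sigma> * (f (l * t) * f x))"
  proof (rule integral_le)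
    show "(\<lambda>t. \<sigma> * (f t * f y)) integrable_on {0..x}"
      by (intro integrable_continuous_real continuous_intros cont_x)
    have "continuous_on {0..x} (\<lambda>t. f (l * t))"
      using l y by (intro continuous_on_compose2[OF cont_x] continuous_intros)
        (auto simp: mult_left_le_one_le)
    then show "(\<lambda>t. \<sigma> * (f (l * t) * f x)) integrable_on {0..x}"
      by (intro integrable_continuous_real continuous_intros)
    show "\<sigma> * (f t * f y) \<le> \<sigma> * (f (l * t) * f x)" if "t \<in> {0..x}" for t
      using dilation_quotient_monoD[OF mono _ _ y(3) l(1,2), of t] that by (simp add: l(3))
  qed
  then have "\<sigma> * (integral {0..x} f * f y) \<le> \<sigma> * (integral {0..y} f / l * f x)"
    by (simp add: stretch)
  then have "y * (\<sigma> * (integral {0..x} f * f y)) \<le> y * (\<sigma> * (integral {0..y} f / l * f x))"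
    by (rule mult_left_mono) (use y in simp)
  also have "y * (\<sigma> * (integral {0..y} f / l * f x)) = \<sigma> * (x * f x * integral {0..y} f)"
    using y by (simp add: l_def)
  finally show ?thesis
    by (simp only: ac_simps)
qed

lemma signed_exp_mono:
  fixes \<sigma> a b :: real
  assumes "\<sigma> * a \<le> \<sigma> * b"
  shows "\<sigma> * exp a \<le> \<sigma> * exp b"
  using assms by (auto simp: mult_le_cancel_left)

lemma integral_ratio_powr_le:
  fixes f :: "real \<Rightarrow> real" and k r s :: real
  assumes mono: "dilation_quotient_mono \<sigma> f" and cont: "continuous_on {0..<1} f"
    and pos: "\<forall>t\<in>{0..<1}. 0 < f t"
    and k: "1 < k" and rs: "0 < s" "s \<le> r" "r < 1"
  shows "\<sigma> * ((integral {0..s} f / integral {0..r} f) powr k)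
     \<le> \<sigma> * (integral {0..s powr k} f / integral {0..r powr k} f)"
proof -
  define F where "F u = integral {0..u} f" for u
  have F_pos: "0 < F u" if "0 < u" "u < 1" for u
    unfolding F_def using that pos
    by (intro integral_pos_if_continuous_pos continuous_on_subset[OF cont]) auto
  have dF: "(F has_real_derivative f u) (at u)" if "0 < u" "u < 1" for u
    unfolding F_def using integral_has_real_derivative_at[OF cont] that by blast
  have powr_k: "0 < u powr k" "u powr k \<le> u" if "0 < u" "u < 1" for u
    using that k powr_mono'[of 1 k u] by auto
  define L where "L x = \<sigma> * (ln (F (x powr k)) - k * ln (F x))" for x
  have L_antimono: "L r \<le> L s"
  proof (rule DERIV_nonpos_imp_nonincreasing[OF rs(2)])
    fix x assume x: "s \<le> x" "x \<le> r"
    define y where "y = x powr k"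
    have x01: "0 < x" "x < 1" and y: "0 < y" "y \<le> x" "y < 1"
      using x rs powr_k[of x] by (auto simp: y_def)
    have F_xy: "0 < F x" "0 < F y" using F_pos x01 y by auto
    have d1: "((\<lambda>x. F (x powr k)) has_real_derivative f y * (k * x powr (k - 1))) (at x)"
      unfolding y_def by (rule DERIV_chain2[OF dF has_real_derivative_powr]) (use y x01 in \<open>auto simp: y_def\<close>)
    have d2: "((\<lambda>x. ln (F (x powr k))) has_real_derivative inverse (F y) * (f y * (k * x powr (k - 1)))) (at x)"
      unfolding y_def by (rule DERIV_chain2[OF DERIV_ln d1[unfolded y_def]]) (use F_xy in \<open>simp add: y_def\<close>)
    have d3: "((\<lambda>x. ln (F x)) has_real_derivative inverse (F x) * f x) (at x)"
      by (rule DERIV_chain2[OF DERIV_ln dF]) (use F_xy x01 in auto)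
    have "(L has_real_derivative
        \<sigma> * (inverse (F y) * (f y * (k * x powr (k - 1))) - k * (inverse (F x) * f x))) (at x)"
      unfolding L_def by (intro DERIV_cmult DERIV_diff d2 d3)
    moreover have "x powr (k - 1) = y / x"
      using x01 by (simp add: powr_diff y_def)
    then have "\<sigma> * (inverse (F y) * (f y * (k * x powr (k - 1))) - k * (inverse (F x) * f x))
        = k / (x * F y * F x) * (\<sigma> * (y * f y * F x) - \<sigma> * (x * f x * F y))"
      using x01 F_xy by (simp add: field_simps)
    moreover have "\<sigma> * (y * f y * F x) \<le> \<sigma> * (x * f x * F y)"
      unfolding F_def using integral_elasticity_mono[OF mono cont] y x01 by blast
    then have "k / (x * F y * F x) * (\<sigma> * (y * f y * F x) - \<sigma> * (x * f x * F y)) \<le> 0"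
      using k x01 F_xy by (intro mult_nonneg_nonpos) auto
    ultimately show "\<exists>D. (L has_real_derivative D) (at x) \<and> D \<le> 0"
      by auto
  qed
  have F_rs: "0 < F s" "0 < F r" "0 < F (s powr k)" "0 < F (r powr k)"
    using F_pos[of s] F_pos[of r] F_pos[of "s powr k"] F_pos[of "r powr k"] powr_k[of s] powr_k[of r] rs
    by auto
  have "\<sigma> * (k * (ln (F s) - ln (F r))) \<le> \<sigma> * (ln (F (s powr k)) - ln (F (r powr k)))"
    using L_antimono by (simp add: L_def algebra_simps)
  then have "\<sigma> * exp (k * (ln (F s) - ln (F r))) \<le> \<sigma> * exp (ln (F (s powr k)) - ln (F (r powr k)))"
    by (rule signed_exp_mono)
  also have "exp (k * (ln (F s) - ln (F r))) = (F s / F r) powr k"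
    using F_rs by (simp add: powr_def ln_div)
  also have "exp (ln (F (s powr k)) - ln (F (r powr k))) = F (s powr k) / F (r powr k)"
    using F_rs by (simp add: exp_diff)
  finally show ?thesis
    unfolding F_def .
qed

lemma dilation_quotient_mono_compose_powr:
  fixes p :: real
  assumes "dilation_quotient_mono \<sigma> \<phi>" "0 < p"
  shows "dilation_quotient_mono \<sigma> (\<lambda>t. \<phi> (t powr p))"
  unfolding dilation_quotient_mono_def
proof (intro allI impI)
  fix t x l :: real
  assume tx: "0 \<le> t" "t \<le> x" "x < 1" "0 < l" "l \<le> 1"
  have "x powr p < 1" "l powr p \<le> 1"
    using tx assms(2) powr_less_mono2[of p x 1] powr_mono2[of p l 1] by auto
  then have "\<sigma> * (\<phi> (t powr p) * \<phi> (l powr p * x powr p)) \<le> \<sigma> * (\<phi> (l powr p * t powr p) * \<phi> (x powr p))"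
    using tx assms by (intro dilation_quotient_monoD[OF assms(1)] powr_mono2) auto
  then show "\<sigma> * (\<phi> (t powr p) * \<phi> ((l * x) powr p)) \<le> \<sigma> * (\<phi> ((l * t) powr p) * \<phi> (x powr p))"
    using tx by (simp add: powr_mult)
qed

lemma integral_ratio_powr_le_compose_powr:
  fixes \<phi> :: "real \<Rightarrow> real" and k p r s :: real
  assumes "dilation_quotient_mono \<sigma> \<phi>" "continuous_on {0..<1} \<phi>" "\<forall>u\<in>{0..<1}. 0 < \<phi> u"
    and "0 < p" "1 < k" "0 < s" "s \<le> r" "r < 1"
  shows "\<sigma> * ((integral {0..s} (\<lambda>t. \<phi> (t powr p)) / integral {0..r} (\<lambda>t. \<phi> (t powr p))) powr k)
     \<le> \<sigma> * (integral {0..s powr k} (\<lambda>t. \<phi> (t powr p)) / integral {0..r powr k} (\<lambda>t. \<phi> (t powr p)))"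
proof (rule integral_ratio_powr_le)
  have powr_in: "t powr p \<in> {0..<1}" if "t \<in> {0..<1}" for t
    using that \<open>0 < p\<close> powr_less_mono2[of p t 1] by auto
  have cont: "continuous_on {0..<1} (\<lambda>t::real. t powr p)"
    using \<open>0 < p\<close> by (intro continuous_on_powr' continuous_on_id continuous_on_const) auto
  then show "continuous_on {0..<1} (\<lambda>t. \<phi> (t powr p))"
    using powr_in by (intro continuous_on_compose2[OF assms(2)]) auto
  show "\<forall>t\<in>{0..<1}. 0 < \<phi> (t powr p)"
    using powr_in assms(3) by blast
qed (use assms dilation_quotient_mono_compose_powr in auto)

lemma one_minus_dilation_le:
  fixes t x l :: real
  assumes "t \<le> x" "l \<le> 1"
  shows "(1 - l * t) * (1 - x) \<le> (1 - t) * (1 - l * x)"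
  using assms mult_right_mono[of l 1 "x - t"] by (simp add: algebra_simps)

lemma one_plus_dilation_le:
  fixes t x l :: real
  assumes "t \<le> x" "l \<le> 1"
  shows "(1 + t) * (1 + l * x) \<le> (1 + l * t) * (1 + x)"
  using assms mult_right_mono[of l 1 "x - t"] by (simp add: algebra_simps)

lemma dilation_quotient_mono_one_minus_powr:
  fixes a :: real
  assumes "a \<le> 0"
  shows "dilation_quotient_mono 1 (\<lambda>u. (1 - u) powr a)"
  unfolding dilation_quotient_mono_def
proof (intro allI impI)
  fix t x l :: real
  assume tx: "0 \<le> t" "t \<le> x" "x < 1" "0 < l" "l \<le> 1"
  have "l * t \<le> t" "l * x \<le> x" using tx by (auto simp: mult_left_le_one_le)
  then have "((1 - t) * (1 - l * x)) powr a \<le> ((1 - l * t) * (1 - x)) powr a"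
    using tx assms one_minus_dilation_le[of t x l] by (intro powr_mono2') auto
  with tx \<open>l * t \<le> t\<close> \<open>l * x \<le> x\<close>
  show "1 * ((1 - t) powr a * (1 - l * x) powr a) \<le> 1 * ((1 - l * t) powr a * (1 - x) powr a)"
    by (simp add: powr_mult)
qed

lemma dilation_quotient_mono_one_plus_powr:
  fixes a :: real
  assumes "a \<le> 0"
  shows "dilation_quotient_mono (-1) (\<lambda>u. (1 + u) powr a)"
  unfolding dilation_quotient_mono_def
proof (intro allI impI)
  fix t x l :: real
  assume tx: "0 \<le> t" "t \<le> x" "x < 1" "0 < l" "l \<le> 1"
  have "0 < (1 + t) * (1 + l * x)"
    using tx by (intro mult_pos_pos) (auto simp: add_pos_nonneg)
  then have "((1 + l * t) * (1 + x)) powr a \<le> ((1 + t) * (1 + l * x)) powr a"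
    using tx assms one_plus_dilation_le[of t x l] by (intro powr_mono2') auto
  with tx show "- 1 * ((1 + t) powr a * (1 + l * x) powr a) \<le> - 1 * ((1 + l * t) powr a * (1 + x) powr a)"
    by (simp add: powr_mult)
qed

lemma dilation_quotient_mono_inverse_one_minus:
  "dilation_quotient_mono 1 (\<lambda>u. 1 / (1 - u))"
  unfolding dilation_quotient_mono_def
proof (intro allI impI)
  fix t x l :: real
  assume tx: "0 \<le> t" "t \<le> x" "x < 1" "0 < l" "l \<le> 1"
  have "l * t \<le> t" "l * x \<le> x" using tx by (auto simp: mult_left_le_one_le)
  then have "1 / ((1 - t) * (1 - l * x)) \<le> 1 / ((1 - l * t) * (1 - x))"
    using tx one_minus_dilation_le[of t x l] by (intro frac_le) auto
  then show "1 * (1 / (1 - t) * (1 / (1 - l * x))) \<le> 1 * (1 / (1 - l * t) * (1 / (1 - x)))"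
    by simp
qed

lemma arcsin_p_powr_ratio_le:
  fixes k p r s :: real
  assumes "1 < k" "1 < p" "0 < s" "s \<le> r" "r < 1"
  shows "(arcsin_p p s / arcsin_p p r) powr k \<le> arcsin_p p (s powr k) / arcsin_p p (r powr k)"
proof -
  have cont: "continuous_on {0..<1} (\<lambda>u::real. (1 - u) powr (- 1 / p))"
    by (intro continuous_intros) auto
  have "1 * ((arcsin_p p s / arcsin_p p r) powr k) \<le> 1 * (arcsin_p p (s powr k) / arcsin_p p (r powr k))"
    unfolding arcsin_p_def
    by (rule integral_ratio_powr_le_compose_powr[OF dilation_quotient_mono_one_minus_powr[where a = "- 1 / p"]])
      (use assms cont in auto)
  then show ?thesis
    by simp
qed

lemma artanh_p_powr_ratio_le:
  fixes k p r s :: real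
  assumes "1 < k" "1 < p" "0 < s" "s \<le> r" "r < 1"
  shows "(artanh_p p s / artanh_p p r) powr k \<le> artanh_p p (s powr k) / artanh_p p (r powr k)"
proof -
  have cont: "continuous_on {0..<1} (\<lambda>u::real. 1 / (1 - u))"
    by (intro continuous_intros) auto
  have "1 * ((artanh_p p s / artanh_p p r) powr k) \<le> 1 * (artanh_p p (s powr k) / artanh_p p (r powr k))"
    unfolding artanh_p_def
    by (rule integral_ratio_powr_le_compose_powr[OF dilation_quotient_mono_inverse_one_minus])
      (use assms cont in auto)
  then show ?thesis
    by simp
qed

lemma arsinh_p_powr_ratio_ge:
  fixes k p r s :: real
  assumes "1 < k" "1 < p" "0 < s" "s \<le> r" "r < 1"
  shows "arsinh_p p (s powr k) / arsinh_p p (r powr k) \<le> (arsinh_p p s / arsinh_p p r) powr k"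
proof -
  have cont: "continuous_on {0..<1} (\<lambda>u::real. (1 + u) powr (- 1 / p))"
    by (intro continuous_intros) (auto simp: add_pos_nonneg)
  have "- 1 * ((arsinh_p p s / arsinh_p p r) powr k) \<le> - 1 * (arsinh_p p (s powr k) / arsinh_p p (r powr k))"
    unfolding arsinh_p_def
    by (rule integral_ratio_powr_le_compose_powr[OF dilation_quotient_mono_one_plus_powr[where a = "- 1 / p"]])
      (use assms cont in \<open>auto simp: add_pos_nonneg\<close>)
  then show ?thesis
    by simp
qed

theorem lemma2p6:
  fixes k p r s :: real
  assumes "k > 1" and "p > 1"
    and "0 < r" "r < 1" and "0 < s" "s < 1" and "r \<ge> s"
  shows "(arcsin_p p s / arcsin_p p r) powr k \<le> arcsin_p p (s powr k) / arcsin_p p (r powr k)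
    \<and> (artanh_p p s / artanh_p p r) powr k \<le> artanh_p p (s powr k) / artanh_p p (r powr k)
    \<and> arsinh_p p (s powr k) / arsinh_p p (r powr k) \<le> (arsinh_p p s / arsinh_p p r) powr k"
  using arcsin_p_powr_ratio_le artanh_p_powr_ratio_le arsinh_p_powr_ratio_ge assms by blast

end
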